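(* Let $p$ be a prime, and let $m$ and $n$ be integers with $n \geq 1$ and $n+2 \leq m \leq (p-1)/2$. Let $\lambda = (\lambda_1, \ldots, \lambda_m)$ be a sequence of integers with $p \geq \lambda_1 \geq \cdots \geq \lambda_m > 0$ and $\sum_{k=1}^m \lambda_k \geq np + 1$. Let $\mu = (\mu_1, \ldots, \mu_{2m - 1})$ be a sequence of integers such that $\mu_{i + j - 1} \geq \min\{\lambda_i + \lambda_j - 1, p\}$ for all $1 \leq i, j \leq m$. Then \[\sum_{k = 1}^{2m-1} \mu_k \geq (2n + 1)p.\] *)

theory Defs
  imports "HOL-Computational_Algebra.Primes"
begin

end

theory Submission
  imports Defs
begin

text \<open>
  Each \<open>\<mu>\<^sub>k\<close> is bounded below by a cell \<open>(i, j)\<close> of \<open>{1..m}\<^sup>2\<close> on the anti-diagonal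
  \<open>i + j - 1 = k\<close>, and a monotone lattice path from \<open>(1, 1)\<close> to \<open>(m, m)\<close> supplies
  such a cell for every \<open>k\<close> at once. Along the first row and then the last column,
  \<open>\<Sum>\<mu> \<ge> \<Sum>\<^sub>k min(\<lambda>\<^sub>1 + \<lambda>\<^sub>k - 1, p) + \<Sum>\<^sub>k\<^sub>\<ge>\<^sub>2 \<lambda>\<^sub>k\<close>. If \<open>2\<lambda>\<^sub>1 > p\<close> this suffices:
  either \<open>\<lambda>\<^sub>m\<^sub>-\<^sub>1\<close> is so large that the first \<open>m - 1\<close> minima equal \<open>p\<close>, or the minima
  at \<open>k = 1, m - 1, m\<close> exceed \<open>\<lambda>\<^sub>k\<close> by \<open>p - \<lambda>\<^sub>1\<close>, \<open>\<lambda>\<^sub>1 - 1\<close> and \<open>\<lambda>\<^sub>1 - 1\<close>. If \<open>2\<lambda>\<^sub>1 < p\<close>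
  no minimum is truncated, and the staircase through the cells \<open>(k, k)\<close>, \<open>(k, k + 1)\<close>
  gives \<open>\<Sum>\<mu> \<ge> 4\<Sum>\<lambda> - 2\<lambda>\<^sub>1 - 2m + 1\<close>, enough for \<open>n \<ge> 2\<close>; for \<open>n = 1\<close> the two path
  bounds are played off against each other. Primality of \<open>p\<close> is only used through
  its oddness, which rules out \<open>2\<lambda>\<^sub>1 = p\<close>.
\<close>

lemma sum_row_then_column:
  fixes f :: "nat \<Rightarrow> 'a::comm_monoid_add"
  assumes "1 \<le> m"
  shows "(\<Sum>k=1..2*m-1. f k) = (\<Sum>k=1..m. f k) + (\<Sum>i=2..m. f (m + i - 1))"
proof -
  have split: "{1..2*m-1} = {1..m} \<union> {m+1..m+(m-1)}" using assms by auto
  have "(\<Sum>k=1..2*m-1. f k) = (\<Sum>k=1..m. f k) + (\<Sum>k=m+1..m+(m-1). f k)"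
    unfolding split by (rule sum.union_disjoint) auto
  also have "(\<Sum>k=m+1..m+(m-1). f k) = (\<Sum>i=2..m. f (m + i - 1))"
    using assms by (intro sum.reindex_bij_witness[of _ "\<lambda>i. m + i - 1" "\<lambda>k. k + 1 - m"]) auto
  finally show ?thesis .
qed

lemma sum_odd_even_indices:
  fixes f :: "nat \<Rightarrow> 'a::comm_monoid_add"
  shows "(\<Sum>k=1..2*Suc m-1. f k) = (\<Sum>k=1..Suc m. f (2*k-1)) + (\<Sum>k=1..m. f (2*k))"
proof (induction m)
  case (Suc m)
  have "2 * Suc (Suc m) - 1 = Suc (Suc (2 * Suc m - 1))" by simp
  then show ?case using Suc by (simp add: algebra_simps)
qed simp

lemma antimono_on_interval_Suc:
  fixes f :: "nat \<Rightarrow> 'a::preorder"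
  assumes "\<And>k. a \<le> k \<Longrightarrow> k < b \<Longrightarrow> f (Suc k) \<le> f k"
    and "a \<le> i" "i \<le> j" "j \<le> b"
  shows "f j \<le> f i"
  using \<open>i \<le> j\<close> \<open>j \<le> b\<close>
proof (induction j rule: dec_induct)
  case (step k)
  then show ?case using assms(1)[of k] \<open>a \<le> i\<close> order_trans by fastforce
qed simp

text \<open>
  If the staircase bound stays below \<open>3P\<close>, then \<open>2(L + m) \<ge> P + 7\<close> by parity, and
  \<open>(P - 1 - 2m)(P - 1 - 2L) \<ge> 0\<close> then forces \<open>mL \<ge> 2(P - 1)\<close>.
\<close>

lemma three_mul_le_one_of_path_bounds:
  fixes P L m T :: int
  assumes "odd P" "2 * L + 1 \<le> P" "2 * m + 1 \<le> P" "P + 1 \<le> T" "0 \<le> m"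
  shows "3 * P \<le> m * L + 2 * T - m - L \<or> 3 * P \<le> 4 * T - 2 * L - 2 * m + 1"
proof (rule disjCI)
  assume "\<not> 3 * P \<le> 4 * T - 2 * L - 2 * m + 1"
  then have "P + 5 < 2 * (L + m)" using assms(4) by (simp add: algebra_simps)
  moreover obtain q where "P = 2 * q + 1" using \<open>odd P\<close> by (blast elim: oddE)
  ultimately have sum_large: "P + 7 \<le> 2 * (L + m)" by presburger
  have "0 \<le> (P - 1 - 2 * m) * (P - 1 - 2 * L)" using assms(2,3) by simp
  then have "2 * (P - 1) * (L + m) \<le> (P - 1)\<^sup>2 + 4 * (m * L)"
    by (simp add: algebra_simps power2_eq_square)
  moreover have "(P - 1) * (P + 7) \<le> (P - 1) * (2 * (L + m))"
    using sum_large assms(3,5) by (intro mult_left_mono) auto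
  ultimately have "2 * P - 2 \<le> m * L"
    by (simp add: algebra_simps power2_eq_square)
  then show "3 * P \<le> m * L + 2 * T - m - L" using assms by linarith
qed

locale cauchy_davenport_profile =
  fixes P :: int and m :: nat and lam mu :: "nat \<Rightarrow> int"
  assumes one_le_m: "1 \<le> m"
    and lam_first_le: "lam 1 \<le> P"
    and lam_Suc_le: "\<And>k. 1 \<le> k \<Longrightarrow> k < m \<Longrightarrow> lam (Suc k) \<le> lam k"
    and lam_last_pos: "0 < lam m"
    and mu_ge: "\<And>i j. 1 \<le> i \<Longrightarrow> i \<le> m \<Longrightarrow> 1 \<le> j \<Longrightarrow> j \<le> m \<Longrightarrow>
                  min (lam i + lam j - 1) P \<le> mu (i + j - 1)"
begin

lemma lam_antimono: "1 \<le> i \<Longrightarrow> i \<le> j \<Longrightarrow> j \<le> m \<Longrightarrow> lam j \<le> lam i"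
  using antimono_on_interval_Suc[of 1 m lam] lam_Suc_le by blast

lemma lam_pos: "1 \<le> k \<Longrightarrow> k \<le> m \<Longrightarrow> 1 \<le> lam k"
  using lam_antimono[of k m] lam_last_pos by simp

lemma lam_le_first: "1 \<le> k \<Longrightarrow> k \<le> m \<Longrightarrow> lam k \<le> lam 1"
  using lam_antimono[of 1 k] by simp

lemma sum_lam_tail: "(\<Sum>k=2..m. lam k) = (\<Sum>k=1..m. lam k) - lam 1"
  using one_le_m sum.atLeast_Suc_atMost[of 1 m lam] by (simp add: numeral_2_eq_2)

lemma sum_mu_ge_row_column:
  "(\<Sum>k=1..m. min (lam 1 + lam k - 1) P) + ((\<Sum>k=1..m. lam k) - lam 1) \<le> (\<Sum>k=1..2*m-1. mu k)"
proof -
  have row: "(\<Sum>k=1..m. min (lam 1 + lam k - 1) P) \<le> (\<Sum>k=1..m. mu k)"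
    using mu_ge[of 1] one_le_m by (intro sum_mono) auto
  have "lam i \<le> mu (m + i - 1)" if "i \<in> {2..m}" for i
    using mu_ge[of m i] lam_pos[of m] lam_le_first[of i] lam_first_le one_le_m that by auto
  then have column: "(\<Sum>i=2..m. lam i) \<le> (\<Sum>i=2..m. mu (m + i - 1))"
    by (rule sum_mono)
  show ?thesis
    using row column sum_lam_tail sum_row_then_column[OF one_le_m, of mu] by linarith
qed

lemma sum_mu_ge_staircase:
  assumes "2 * lam 1 \<le> P + 1"
  shows "4 * (\<Sum>k=1..m. lam k) - 2 * lam 1 - 2 * int m + 1 \<le> (\<Sum>k=1..2*m-1. mu k)"
proof -
  obtain m' where m': "m = Suc m'" using one_le_m by (cases m) auto
  have odd: "2 * lam k - 1 \<le> mu (2*k - 1)" if "k \<in> {1..m}" for k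
  proof -
    have "min (lam k + lam k - 1) P \<le> mu (k + k - 1)" using mu_ge[of k k] that by simp
    then have "min (lam k + lam k - 1) P \<le> mu (2*k - 1)" by (simp only: mult_2)
    moreover have "lam k \<le> lam 1" using lam_le_first that by simp
    ultimately show ?thesis using assms by linarith
  qed
  have even: "2 * lam (Suc k) - 1 \<le> mu (2*k)" if "k \<in> {1..m'}" for k
  proof -
    have "min (lam k + lam (Suc k) - 1) P \<le> mu (k + k)"
      using mu_ge[of k "Suc k"] that m' by simp
    then have "min (lam k + lam (Suc k) - 1) P \<le> mu (2*k)" by (simp only: mult_2)
    moreover have "lam (Suc k) \<le> lam k" "lam k \<le> lam 1"
      using lam_Suc_le[of k] lam_le_first[of k] that m' by auto
    ultimately show ?thesis using assms by linarith
  qed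
  have "(\<Sum>k=1..m'. lam (Suc k)) = (\<Sum>k=2..m. lam k)"
    using sum.shift_bounds_cl_Suc_ivl[of lam 1 m'] m' by (simp add: numeral_2_eq_2)
  moreover have "(\<Sum>k=1..m'. 2 * lam (Suc k) - 1) = 2 * (\<Sum>k=1..m'. lam (Suc k)) - int m'"
    by (simp add: sum_subtractf sum_distrib_left)
  moreover have "(\<Sum>k=1..m. 2 * lam k - 1) = 2 * (\<Sum>k=1..m. lam k) - int m"
    by (simp add: sum_subtractf sum_distrib_left)
  moreover have "(\<Sum>k=1..2*m-1. mu k) = (\<Sum>k=1..m. mu (2*k - 1)) + (\<Sum>k=1..m'. mu (2*k))"
    unfolding m' by (rule sum_odd_even_indices)
  moreover have "(\<Sum>k=1..m. 2 * lam k - 1) \<le> (\<Sum>k=1..m. mu (2*k - 1))"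
    using odd by (rule sum_mono)
  moreover have "(\<Sum>k=1..m'. 2 * lam (Suc k) - 1) \<le> (\<Sum>k=1..m'. mu (2*k))"
    using even by (rule sum_mono)
  ultimately show ?thesis using sum_lam_tail m' by linarith
qed

lemma sum_mu_ge_saturated_row:
  assumes "3 \<le> m" "P - lam 1 + 2 \<le> lam (m - 1)"
  shows "int (m - 1) * P + (\<Sum>k=1..m. lam k) \<le> (\<Sum>k=1..2*m-1. mu k)"
proof -
  have "(\<Sum>k=1..m. min (lam 1 + lam k - 1) P)
        = (\<Sum>k=1..m-1. min (lam 1 + lam k - 1) P) + min (lam 1 + lam m - 1) P"
    using sum.cl_ivl_Suc[of _ 1 "m - 1"] assms(1) by simp
  moreover have "(\<Sum>k=1..m-1. min (lam 1 + lam k - 1) P) = (\<Sum>k=1..m-1. P)"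
    using lam_antimono[of _ "m - 1"] assms by (intro sum.cong) force+
  moreover have "lam 1 \<le> min (lam 1 + lam m - 1) P"
    using lam_pos[of m] lam_first_le assms(1) by simp
  ultimately show ?thesis using sum_mu_ge_row_column by simp linarith
qed

lemma sum_mu_ge_unsaturated_row:
  assumes "3 \<le> m" "P + 1 \<le> 2 * lam 1" "lam (m - 1) \<le> P - lam 1 + 1"
  shows "2 * (\<Sum>k=1..m. lam k) + P - 2 \<le> (\<Sum>k=1..2*m-1. mu k)"
proof -
  have lam_last_le: "lam m \<le> lam (m - 1)" using lam_antimono[of "m - 1" m] assms(1) by simp
  define excess where "excess k = min (lam 1 + lam k - 1) P - lam k" for k
  have excess_nonneg: "0 \<le> excess k" if "k \<in> {1..m}" for k
    using lam_le_first[of k] lam_pos[of 1] lam_first_le that assms(1)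
    unfolding excess_def by auto
  have "excess 1 + excess (m - 1) + excess m = (\<Sum>k\<in>{1, m - 1, m}. excess k)"
    using assms(1) by simp
  also have "\<dots> \<le> (\<Sum>k=1..m. excess k)"
    using excess_nonneg assms(1) by (intro sum_mono2) auto
  also have "\<dots> = (\<Sum>k=1..m. min (lam 1 + lam k - 1) P) - (\<Sum>k=1..m. lam k)"
    by (simp add: excess_def sum_subtractf)
  finally have "excess 1 + excess (m - 1) + excess m
      \<le> (\<Sum>k=1..m. min (lam 1 + lam k - 1) P) - (\<Sum>k=1..m. lam k)" .
  moreover have "excess 1 = P - lam 1" "excess (m - 1) = lam 1 - 1" "excess m = lam 1 - 1"
    using assms lam_last_le unfolding excess_def by auto
  ultimately show ?thesis using sum_mu_ge_row_column by linarith
qed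

lemma sum_mu_ge_small_first:
  assumes "odd P" "2 * lam 1 + 1 \<le> P" "2 * int m + 1 \<le> P" "1 \<le> n"
    and "int n * P + 1 \<le> (\<Sum>k=1..m. lam k)"
  shows "(2 * int n + 1) * P \<le> (\<Sum>k=1..2*m-1. mu k)"
proof (cases "n = 1")
  case True
  have "(\<Sum>k=1..m. min (lam 1 + lam k - 1) P) = (\<Sum>k=1..m. lam 1 + lam k - 1)"
    using lam_le_first assms(2) by (intro sum.cong) fastforce+
  then have "int m * lam 1 + 2 * (\<Sum>k=1..m. lam k) - int m - lam 1 \<le> (\<Sum>k=1..2*m-1. mu k)"
    using sum_mu_ge_row_column by (simp add: sum.distrib sum_subtractf)
  then show ?thesis
    using three_mul_le_one_of_path_bounds[of P "lam 1" "int m" "\<Sum>k=1..m. lam k"]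
      sum_mu_ge_staircase assms True by force
next
  case False
  then have "2 * P \<le> int n * P" using assms(1,2,4) lam_pos[of 1] one_le_m
    by (intro mult_right_mono) auto
  moreover have "(2 * int n + 1) * P = 2 * (int n * P) + P"
    by (simp add: algebra_simps)
  ultimately show ?thesis using sum_mu_ge_staircase assms by linarith
qed

end

theorem mainTheorem7:
  fixes p m n :: nat and lam mu :: "nat \<Rightarrow> int"
  assumes "prime p"
    and "n \<ge> 1" and "n + 2 \<le> m" and "2 * m \<le> p - 1"
    and "lam 1 \<le> int p"
    and "\<And>k. 1 \<le> k \<Longrightarrow> k < m \<Longrightarrow> lam k \<ge> lam (k + 1)"
    and "lam m > 0"
    and "(\<Sum>k=1..m. lam k) \<ge> int n * int p + 1"
    and "\<And>i j. 1 \<le> i \<Longrightarrow> i \<le> m \<Longrightarrow> 1 \<le> j \<Longrightarrow> j \<le> m \<Longrightarrow>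
           mu (i + j - 1) \<ge> min (lam i + lam j - 1) (int p)"
  shows "(\<Sum>k=1..2*m-1. mu k) \<ge> (2 * int n + 1) * int p"
proof -
  interpret cauchy_davenport_profile "int p" m lam mu
    using assms(3,5-7,9) by unfold_locales auto
  have "odd (int p)" using assms(1-4) prime_odd_nat by fastforce
  have m: "3 \<le> m" "2 * int m + 1 \<le> int p" using assms(2-4) by linarith+
  have n_plus_one: "(int n + 1) * int p \<le> int (m - 1) * int p"
    using assms(3) by (intro mult_right_mono) auto
  show ?thesis
  proof (cases "2 * lam 1 < int p")
    case True
    then show ?thesis using sum_mu_ge_small_first \<open>odd (int p)\<close> m assms(2,8) by simp
  next
    case False
    have "2 * lam 1 \<noteq> int p" using \<open>odd (int p)\<close> by (metis dvd_triv_left)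
    with False have large_first: "int p + 1 \<le> 2 * lam 1" by linarith
    show ?thesis
    proof (cases "int p - lam 1 + 2 \<le> lam (m - 1)")
      case True
      moreover have "(2 * int n + 1) * int p = int n * int p + (int n + 1) * int p"
        by (simp add: algebra_simps)
      ultimately show ?thesis using sum_mu_ge_saturated_row m n_plus_one assms(8) by linarith
    next
      case False
      moreover have "(2 * int n + 1) * int p = 2 * (int n * int p) + int p"
        by (simp add: algebra_simps)
      ultimately show ?thesis using sum_mu_ge_unsaturated_row large_first m assms(8) by linarith
    qed
  qed
qed

end
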